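(* Let $n\geq 3$ and let $L^B$ be a blow-up of the Boolean lattice $L\cong\mathbf{2}^n$. Then $G^c(L^B)_{SR}$ is connected and $\operatorname{diam}(G^c(L^B)_{SR})\leq 3$.
   Context: Blow-up: keep $0,1$ of $L=\mathbf{2}^n$ and replace every $x\in L\setminus\{0,1\}$ by a finite nonempty chain $C_x$, ordered by the chain order within $C_x$ and, for $a\in C_x,b\in C_y$, $x\neq y$, by $a\leq b$ iff $x\leq y$ in $L$; $0$ least, $1$ greatest. $Z^*(M)$ is the set of nonzero $a$ with $a\wedge b=0$ for some $b\neq0$; $G^c(M)$ has vertex set $Z^*(M)$, distinct $a,b$ adjacent iff $a\wedge b\neq 0$. In a connected graph, $u$ is maximally distant from $v$ if $d(v,w)\leq d(u,v)$ for all neighbours $w$ of $u$; mutually maximally distant means each is maximally distant from the other. $G_{SR}$ has as vertices those $u$ mutually maximally distant from some $v$, distinct vertices adjacent iff mutually maximally distant in $G$. *)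

theory Defs
  imports Main
begin

definition walk :: "'a set \<Rightarrow> ('a \<Rightarrow> 'a \<Rightarrow> bool) \<Rightarrow> 'a list \<Rightarrow> bool" where
  "walk V E xs \<longleftrightarrow> xs \<noteq> [] \<and> set xs \<subseteq> V \<and> (\<forall>i. Suc i < length xs \<longrightarrow> E (xs ! i) (xs ! Suc i))"

definition has_walk :: "'a set \<Rightarrow> ('a \<Rightarrow> 'a \<Rightarrow> bool) \<Rightarrow> 'a \<Rightarrow> 'a \<Rightarrow> nat \<Rightarrow> bool" where
  "has_walk V E u v m \<longleftrightarrow> (\<exists>xs. walk V E xs \<and> hd xs = u \<and> last xs = v \<and> length xs = Suc m)"

definition connected_graph :: "'a set \<Rightarrow> ('a \<Rightarrow> 'a \<Rightarrow> bool) \<Rightarrow> bool" where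
  "connected_graph V E \<longleftrightarrow> V \<noteq> {} \<and> (\<forall>u\<in>V. \<forall>v\<in>V. \<exists>m. has_walk V E u v m)"

text \<open>Distance: length (number of edges) of a shortest walk (meaningful in a connected graph).\<close>
definition gdist :: "'a set \<Rightarrow> ('a \<Rightarrow> 'a \<Rightarrow> bool) \<Rightarrow> 'a \<Rightarrow> 'a \<Rightarrow> nat" where
  "gdist V E u v = (LEAST m. has_walk V E u v m)"

definition max_distant :: "'a set \<Rightarrow> ('a \<Rightarrow> 'a \<Rightarrow> bool) \<Rightarrow> 'a \<Rightarrow> 'a \<Rightarrow> bool" where
  "max_distant V E u v \<longleftrightarrow> u \<in> V \<and> v \<in> V \<and>
     (\<forall>w\<in>V. E u w \<longrightarrow> gdist V E v w \<le> gdist V E u v)"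

definition mutually_max_distant :: "'a set \<Rightarrow> ('a \<Rightarrow> 'a \<Rightarrow> bool) \<Rightarrow> 'a \<Rightarrow> 'a \<Rightarrow> bool" where
  "mutually_max_distant V E u v \<longleftrightarrow> max_distant V E u v \<and> max_distant V E v u"

definition SR_vertices :: "'a set \<Rightarrow> ('a \<Rightarrow> 'a \<Rightarrow> bool) \<Rightarrow> 'a set" where
  "SR_vertices V E = {u\<in>V. \<exists>v\<in>V. mutually_max_distant V E u v}"

definition SR_adj :: "'a set \<Rightarrow> ('a \<Rightarrow> 'a \<Rightarrow> bool) \<Rightarrow> 'a \<Rightarrow> 'a \<Rightarrow> bool" where
  "SR_adj V E u v \<longleftrightarrow> u \<noteq> v \<and> mutually_max_distant V E u v"

definition meet_in :: "'a set \<Rightarrow> ('a \<Rightarrow> 'a \<Rightarrow> bool) \<Rightarrow> 'a \<Rightarrow> 'a \<Rightarrow> 'a" where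
  "meet_in M le a b = (THE m. m \<in> M \<and> le m a \<and> le m b \<and> (\<forall>c\<in>M. le c a \<and> le c b \<longrightarrow> le c m))"

definition Zstar :: "'a set \<Rightarrow> ('a \<Rightarrow> 'a \<Rightarrow> bool) \<Rightarrow> 'a \<Rightarrow> 'a set" where
  "Zstar M le z = {a\<in>M. a \<noteq> z \<and> (\<exists>b\<in>M. b \<noteq> z \<and> meet_in M le a b = z)}"

definition Gc_adj :: "'a set \<Rightarrow> ('a \<Rightarrow> 'a \<Rightarrow> bool) \<Rightarrow> 'a \<Rightarrow> 'a \<Rightarrow> 'a \<Rightarrow> bool" where
  "Gc_adj M le z a b \<longleftrightarrow> a \<noteq> b \<and> meet_in M le a b \<noteq> z"

text \<open>Element x of 2^n other than 0 = {} and 1 = {0..<n} is replaced by the chain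
  Mid x 0 < Mid x 1 < ... < Mid x (k x - 1).\<close>
datatype blow_elem = Bot | Top | Mid "nat set" nat

definition blowup_carrier :: "nat \<Rightarrow> (nat set \<Rightarrow> nat) \<Rightarrow> blow_elem set" where
  "blowup_carrier n k = {Bot, Top} \<union>
     {Mid x i | x i. x \<subseteq> {0..<n} \<and> x \<noteq> {} \<and> x \<noteq> {0..<n} \<and> i < k x}"

fun blowup_le :: "blow_elem \<Rightarrow> blow_elem \<Rightarrow> bool" where
  "blowup_le Bot _ = True"
| "blowup_le _ Top = True"
| "blowup_le (Mid x i) (Mid y j) = (if x = y then i \<le> j else x \<subseteq> y)"
| "blowup_le _ _ = False"

text \<open>A blow-up is valid when every chain is nonempty (finiteness is automatic).\<close>
definition valid_blowup :: "nat \<Rightarrow> (nat set \<Rightarrow> nat) \<Rightarrow> bool" where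
  "valid_blowup n k \<longleftrightarrow> (\<forall>x. x \<subseteq> {0..<n} \<and> x \<noteq> {} \<and> x \<noteq> {0..<n} \<longrightarrow> 1 \<le> k x)"

abbreviation GcV :: "nat \<Rightarrow> (nat set \<Rightarrow> nat) \<Rightarrow> blow_elem set" where
  "GcV n k \<equiv> Zstar (blowup_carrier n k) blowup_le Bot"

abbreviation GcE :: "nat \<Rightarrow> (nat set \<Rightarrow> nat) \<Rightarrow> blow_elem \<Rightarrow> blow_elem \<Rightarrow> bool" where
  "GcE n k \<equiv> Gc_adj (blowup_carrier n k) blowup_le Bot"

end

theory Submission
  imports Defs
begin

(* In the zero-divisor complement graph of the blow-up, the vertices are exactly the chain
   elements Mid x i, and two of them are adjacent iff their underlying sets x and y meet.
   Since n >= 3, any two vertices have a common neighbour over a two-element set {a, b}, so the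
   graph has diameter 2 and pairs over disjoint sets realise it; such pairs are therefore
   mutually maximally distant. Every vertex has such a partner over the complement of x, so
   G_SR has the same vertices, and any two of them are joined in G_SR through the complement
   of x \<union> y or, if x \<union> y is everything, through the complements of x and y. *)

lemma has_walk_refl: "u \<in> V \<Longrightarrow> has_walk V E u u 0"
  unfolding has_walk_def walk_def by (intro exI[of _ "[u]"]) auto

lemma has_walk_Cons:
  assumes "has_walk V E v w m" "E u v" "u \<in> V"
  shows "has_walk V E u w (Suc m)"
proof -
  obtain xs where xs: "walk V E xs" "hd xs = v" "last xs = w" "length xs = Suc m"
    using assms(1) unfolding has_walk_def by blast
  have "walk V E (u # xs)"
    unfolding walk_def
  proof (intro conjI allI impI)
    fix i assume "Suc i < length (u # xs)"
    with xs assms(2) show "E ((u # xs) ! i) ((u # xs) ! Suc i)"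
      by (cases i) (auto simp: walk_def hd_conv_nth)
  qed (use xs assms(3) in \<open>auto simp: walk_def\<close>)
  with xs show ?thesis
    unfolding has_walk_def by (intro exI[of _ "u # xs"]) auto
qed

lemma has_walk_adj: "E u v \<Longrightarrow> u \<in> V \<Longrightarrow> v \<in> V \<Longrightarrow> has_walk V E u v (Suc 0)"
  by (rule has_walk_Cons[OF has_walk_refl])

lemma has_walk_0_imp_eq: "has_walk V E u v 0 \<Longrightarrow> u = v"
  unfolding has_walk_def by (auto simp: length_Suc_conv)

lemma has_walk_1_imp_adj: "has_walk V E u v (Suc 0) \<Longrightarrow> E u v"
  unfolding has_walk_def walk_def by (fastforce simp: length_Suc_conv)

lemma gdist_le: "has_walk V E u v m \<Longrightarrow> gdist V E u v \<le> m"
  unfolding gdist_def by (rule Least_le)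

lemma gdist_eqI:
  assumes "has_walk V E u v d" "\<And>l. l < d \<Longrightarrow> \<not> has_walk V E u v l"
  shows "gdist V E u v = d"
  unfolding gdist_def using assms by (intro Least_equality) (auto simp: not_less[symmetric])

lemma gdist_refl: "u \<in> V \<Longrightarrow> gdist V E u u = 0"
  by (rule gdist_eqI[OF has_walk_refl]) auto

lemma gdist_eq_1:
  assumes "E u v" "u \<noteq> v" "u \<in> V" "v \<in> V"
  shows "gdist V E u v = 1"
proof (rule gdist_eqI)
  show "has_walk V E u v 1"
    using has_walk_adj assms by simp
qed (use assms(2) in \<open>auto dest: has_walk_0_imp_eq\<close>)

lemma gdist_eq_2:
  assumes "has_walk V E u v 2" "u \<noteq> v" "\<not> E u v"
  shows "gdist V E u v = 2"
proof (rule gdist_eqI[OF assms(1)])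
  fix l :: nat assume "l < 2"
  then consider "l = 0" | "l = 1" by linarith
  then show "\<not> has_walk V E u v l"
    by cases (use assms(2,3) in \<open>auto dest: has_walk_0_imp_eq has_walk_1_imp_adj\<close>)
qed

lemma connected_graph_if_walks_le:
  assumes "V \<noteq> {}" "\<And>u v. u \<in> V \<Longrightarrow> v \<in> V \<Longrightarrow> \<exists>m\<le>d. has_walk V E u v m"
  shows "connected_graph V E \<and> (\<forall>u\<in>V. \<forall>v\<in>V. gdist V E u v \<le> d)"
  using assms gdist_le order_trans unfolding connected_graph_def by meson

lemma mutually_max_distant_if_diametral:
  assumes "u \<in> V" "v \<in> V" "\<And>a b. a \<in> V \<Longrightarrow> b \<in> V \<Longrightarrow> gdist V E a b \<le> d"
    and "gdist V E u v = d" "gdist V E v u = d"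
  shows "mutually_max_distant V E u v"
  using assms unfolding mutually_max_distant_def max_distant_def by auto

lemma meet_in_eqI:
  assumes "\<And>a b. le a b \<Longrightarrow> le b a \<Longrightarrow> a = b"
    and "m \<in> M" "le m a" "le m b" "\<And>c. c \<in> M \<Longrightarrow> le c a \<Longrightarrow> le c b \<Longrightarrow> le c m"
  shows "meet_in M le a b = m"
  unfolding meet_in_def using assms by (intro the_equality) blast+

lemma blowup_le_antisym: "blowup_le a b \<Longrightarrow> blowup_le b a \<Longrightarrow> a = b"
  by (cases a; cases b) (auto split: if_splits)

locale boolean_blowup =
  fixes n :: nat and k :: "nat set \<Rightarrow> nat"
  assumes three_le_n: "3 \<le> n" and valid: "valid_blowup n k"
begin

abbreviation "C \<equiv> blowup_carrier n k"
abbreviation "V \<equiv> GcV n k"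
abbreviation "E \<equiv> GcE n k"

lemma Mid_in_carrier_iff [simp]:
  "Mid x i \<in> C \<longleftrightarrow> x \<subseteq> {0..<n} \<and> x \<noteq> {} \<and> x \<noteq> {0..<n} \<and> i < k x"
  unfolding blowup_carrier_def by blast

lemma k_pos: "x \<subseteq> {0..<n} \<Longrightarrow> x \<noteq> {} \<Longrightarrow> x \<noteq> {0..<n} \<Longrightarrow> 0 < k x"
  using valid unfolding valid_blowup_def by (simp add: Suc_le_eq)

lemma carrier_cases:
  assumes "c \<in> C" obtains "c = Bot" | "c = Top" | x i where "c = Mid x i" "Mid x i \<in> C"
  using assms unfolding blowup_carrier_def by blast

(* When x \<inter> y is a proper subset of both x and y, the meet is the top of the chain over x \<inter> y. *)
definition meet_index :: "nat set \<Rightarrow> nat \<Rightarrow> nat set \<Rightarrow> nat \<Rightarrow> nat" where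
  "meet_index x i y j =
     (if x \<subseteq> y then if y \<subseteq> x then min i j else i else if y \<subseteq> x then j else k (x \<inter> y) - 1)"

lemma meet_Mid_overlap:
  assumes "Mid x i \<in> C" "Mid y j \<in> C" "x \<inter> y \<noteq> {}"
  shows "meet_in C blowup_le (Mid x i) (Mid y j) = Mid (x \<inter> y) (meet_index x i y j)"
proof (rule meet_in_eqI[OF blowup_le_antisym])
  have "0 < k (x \<inter> y)"
    using assms by (intro k_pos) auto
  then show "Mid (x \<inter> y) (meet_index x i y j) \<in> C"
    using assms by (auto simp: meet_index_def Int_absorb1 Int_absorb2)
  fix c assume c: "c \<in> C" "blowup_le c (Mid x i)" "blowup_le c (Mid y j)"
  show "blowup_le c (Mid (x \<inter> y) (meet_index x i y j))"
  proof (cases rule: carrier_cases[OF c(1)])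
    case (3 z l)
    with c have "z \<subseteq> x \<inter> y" "z = x \<longrightarrow> l \<le> i" "z = y \<longrightarrow> l \<le> j" "l < k z"
      by (auto split: if_splits)
    then show ?thesis
      unfolding 3 by (auto simp: meet_index_def Int_absorb1 Int_absorb2)
  qed (use c in auto)
qed (use assms in \<open>auto simp: meet_index_def\<close>)

lemma meet_Mid_disjoint:
  assumes "Mid x i \<in> C" "Mid y j \<in> C" "x \<inter> y = {}"
  shows "meet_in C blowup_le (Mid x i) (Mid y j) = Bot"
proof (rule meet_in_eqI[OF blowup_le_antisym])
  fix c assume "c \<in> C" "blowup_le c (Mid x i)" "blowup_le c (Mid y j)"
  then show "blowup_le c Bot"
    using assms by (cases c rule: carrier_cases) (auto split: if_splits)
qed (auto simp: blowup_carrier_def)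

lemma meet_Mid_eq_Bot_iff:
  assumes "Mid x i \<in> C" "Mid y j \<in> C"
  shows "meet_in C blowup_le (Mid x i) (Mid y j) = Bot \<longleftrightarrow> x \<inter> y = {}"
proof (cases "x \<inter> y = {}")
  case False
  then show ?thesis using meet_Mid_overlap[OF assms False] by simp
qed (simp add: meet_Mid_disjoint[OF assms])

lemma meet_Top: "b \<in> C \<Longrightarrow> meet_in C blowup_le Top b = b"
  by (rule meet_in_eqI[OF blowup_le_antisym]) (auto elim: carrier_cases)

lemma complement_in_carrier: "Mid x i \<in> C \<Longrightarrow> Mid ({0..<n} - x) 0 \<in> C"
  using k_pos[of "{0..<n} - x"] by auto

lemma pair_in_carrier: "a < n \<Longrightarrow> b < n \<Longrightarrow> Mid {a, b} 0 \<in> C"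
proof -
  assume "a < n" "b < n"
  moreover have "card {a, b} < card {0..<n}"
    using three_le_n by (simp add: card_insert_if)
  then have "{a, b} \<noteq> {0..<n}" by auto
  ultimately show ?thesis
    using k_pos[of "{a, b}"] by auto
qed

lemma GcV_eq: "V = C - {Bot, Top}"
proof
  show "V \<subseteq> C - {Bot, Top}"
    using meet_Top by (auto simp: Zstar_def)
  show "C - {Bot, Top} \<subseteq> V"
  proof
    fix u assume "u \<in> C - {Bot, Top}"
    then obtain x i where u: "u = Mid x i" "Mid x i \<in> C"
      by (auto elim: carrier_cases)
    then have "meet_in C blowup_le u (Mid ({0..<n} - x) 0) = Bot"
      using meet_Mid_disjoint complement_in_carrier by blast
    with u complement_in_carrier show "u \<in> V"
      unfolding Zstar_def by blast
  qed
qed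

lemma GcV_cases:
  assumes "u \<in> V" obtains x i where "u = Mid x i" "Mid x i \<in> C"
  using assms unfolding GcV_eq by (auto elim: carrier_cases)

lemma Mid_in_GcV_iff [simp]: "Mid x i \<in> V \<longleftrightarrow> Mid x i \<in> C"
  unfolding GcV_eq by simp

lemma GcE_Mid_iff:
  assumes "Mid x i \<in> C" "Mid y j \<in> C"
  shows "E (Mid x i) (Mid y j) \<longleftrightarrow> Mid x i \<noteq> Mid y j \<and> x \<inter> y \<noteq> {}"
  using meet_Mid_eq_Bot_iff[OF assms] by (auto simp: Gc_adj_def)

lemma has_walk_Mid_disjoint:
  assumes u: "Mid x i \<in> C" and v: "Mid y j \<in> C" and "x \<inter> y = {}"
  shows "has_walk V E (Mid x i) (Mid y j) 2"
proof -
  \<comment> \<open>Mid {a, b} 0 is a common neighbour; {a, b} is a proper subset because n \<ge> 3.\<close>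
  obtain a b where ab: "a \<in> x" "b \<in> y"
    using u v by auto
  with u v have w: "Mid {a, b} 0 \<in> C"
    by (intro pair_in_carrier) auto
  have "x \<noteq> {a, b}" "y \<noteq> {a, b}"
    using ab assms(3) by auto
  with ab have "E (Mid {a, b} 0) (Mid y j)" "E (Mid x i) (Mid {a, b} 0)"
    by (auto simp: GcE_Mid_iff[OF w v] GcE_Mid_iff[OF u w])
  from has_walk_Cons[OF has_walk_adj[where E = E, OF this(1)] this(2)] show ?thesis
    using u v w by (simp add: numeral_2_eq_2)
qed

lemma gdist_le_2:
  assumes "u \<in> V" "v \<in> V"
  shows "gdist V E u v \<le> 2"
proof -
  obtain x i y j where u: "u = Mid x i" "Mid x i \<in> C" and v: "v = Mid y j" "Mid y j \<in> C"
    using assms by (elim GcV_cases)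
  consider "u = v" | "u \<noteq> v" "x \<inter> y \<noteq> {}" | "x \<inter> y = {}" by blast
  then show ?thesis
  proof cases
    case 1 then show ?thesis using gdist_refl[OF assms(2), of E] by simp
  next
    case 2
    with u v have "E u v" by (simp add: GcE_Mid_iff)
    with 2 assms show ?thesis by (simp add: gdist_eq_1)
  next
    case 3 then show ?thesis using gdist_le[OF has_walk_Mid_disjoint] u v by simp
  qed
qed

lemma gdist_Mid_disjoint:
  assumes "Mid x i \<in> C" "Mid y j \<in> C" "x \<inter> y = {}"
  shows "gdist V E (Mid x i) (Mid y j) = 2"
  using assms by (intro gdist_eq_2 has_walk_Mid_disjoint) (auto simp: GcE_Mid_iff)

lemma mutually_max_distant_Mid_disjoint:
  assumes "Mid x i \<in> C" "Mid y j \<in> C" "x \<inter> y = {}"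
  shows "mutually_max_distant V E (Mid x i) (Mid y j)"
  using assms gdist_Mid_disjoint[OF assms] gdist_Mid_disjoint[of y j x i]
  by (intro mutually_max_distant_if_diametral[where d = 2] gdist_le_2) auto

lemma SR_vertices_eq: "SR_vertices V E = V"
proof -
  have "u \<in> SR_vertices V E" if "u \<in> V" for u
  proof -
    obtain x i where u: "u = Mid x i" "Mid x i \<in> C"
      using \<open>u \<in> V\<close> by (elim GcV_cases)
    have c: "Mid ({0..<n} - x) 0 \<in> C"
      using complement_in_carrier[OF u(2)] .
    have "mutually_max_distant V E u (Mid ({0..<n} - x) 0)"
      using mutually_max_distant_Mid_disjoint[OF u(2) c] u(1) by auto
    with that c show ?thesis
      unfolding SR_vertices_def using Mid_in_GcV_iff by blast
  qed
  then show ?thesis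
    unfolding SR_vertices_def by blast
qed

lemma SR_adj_Mid_disjoint:
  assumes "Mid x i \<in> C" "Mid y j \<in> C" "x \<inter> y = {}"
  shows "SR_adj V E (Mid x i) (Mid y j)"
  using assms mutually_max_distant_Mid_disjoint[OF assms] by (auto simp: SR_adj_def)

lemma SR_has_walk_le_3:
  assumes "u \<in> V" "v \<in> V"
  shows "\<exists>m\<le>3. has_walk V (SR_adj V E) u v m"
proof -
  obtain x i y j where u: "u = Mid x i" "Mid x i \<in> C" and v: "v = Mid y j" "Mid y j \<in> C"
    using assms by (elim GcV_cases)
  show ?thesis
  proof (cases "x \<union> y = {0..<n}")
    case False
    define z where "z = {0..<n} - (x \<union> y)"
    have "z \<noteq> {}" "z \<noteq> {0..<n}"
      using False u(2) v(2) by (auto simp: z_def)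
    then have z: "Mid z 0 \<in> C"
      using k_pos[of z] by (auto simp: z_def)
    have "SR_adj V E (Mid z 0) v" "SR_adj V E u (Mid z 0)"
      unfolding u(1) v(1) by (rule SR_adj_Mid_disjoint; (fact | auto simp: z_def))+
    from has_walk_Cons[OF has_walk_adj[where E = "SR_adj V E", OF this(1)] this(2)]
    have "has_walk V (SR_adj V E) u v 2"
      using assms z by (simp add: numeral_2_eq_2)
    then show ?thesis by (intro exI[of _ 2]) simp
  next
    case True
    define x' y' where "x' = {0..<n} - x" and "y' = {0..<n} - y"
    have x': "Mid x' 0 \<in> C" and y': "Mid y' 0 \<in> C"
      unfolding x'_def y'_def
      by (rule complement_in_carrier[OF u(2)] complement_in_carrier[OF v(2)])+
    have "SR_adj V E (Mid y' 0) v" "SR_adj V E (Mid x' 0) (Mid y' 0)" "SR_adj V E u (Mid x' 0)"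
      unfolding u(1) v(1)
      by (rule SR_adj_Mid_disjoint; (fact | use True in \<open>auto simp: x'_def y'_def\<close>))+
    from has_walk_Cons[OF has_walk_Cons[OF has_walk_adj[where E = "SR_adj V E", OF this(1)] this(2)]
        this(3)]
    have "has_walk V (SR_adj V E) u v 3"
      using assms x' y' by (simp add: numeral_3_eq_3)
    then show ?thesis by (intro exI[of _ 3]) simp
  qed
qed

end

theorem lemma3p18:
  fixes n :: nat and k :: "nat set \<Rightarrow> nat"
  assumes "n \<ge> 3" and "valid_blowup n k"
  shows "connected_graph (SR_vertices (GcV n k) (GcE n k)) (SR_adj (GcV n k) (GcE n k))
       \<and> (\<forall>u\<in>SR_vertices (GcV n k) (GcE n k). \<forall>v\<in>SR_vertices (GcV n k) (GcE n k).
            gdist (SR_vertices (GcV n k) (GcE n k)) (SR_adj (GcV n k) (GcE n k)) u v \<le> 3)"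
proof -
  interpret boolean_blowup n k
    using assms by unfold_locales
  have "Mid {0, 0} 0 \<in> C"
    using three_le_n by (intro pair_in_carrier) auto
  then have "V \<noteq> {}"
    using Mid_in_GcV_iff by blast
  then show ?thesis
    unfolding SR_vertices_eq by (rule connected_graph_if_walks_le[OF _ SR_has_walk_le_3])
qed

end
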